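(* Consider Implicit SGD with learning rate $\eta>0$ applied to the function $f$ below, where in each iteration one datapoint $i$ and one class $k\neq y_i$ are sampled, i.e. the new iterate is $$(u',W')=\arg\min_{u,W}\Big\{2\eta f_{ik}(u,W)+\|u-\tilde u\|_2^2+\|W-\tilde W\|_2^2\Big\},$$ where $(\tilde u,\tilde W)$ is the current iterate. Then this iterate can be computed to within $\epsilon$ accuracy using only two $D$-dimensional vector inner products and at most $$\log_2(\epsilon^{-1})+\log_2\Big(\Big|x_i^\top\Big(\tfrac{\tilde w_k}{1+\eta\mu\beta_k}-\tfrac{\tilde w_{y_i}}{1+\eta\mu\beta_{y_i}}\Big)-\tilde u_i\Big|+2\eta N\|x_i\|_2^2+\log(2K)\Big)$$ bisection-method function evaluations.
   Context: Data: $(y_i,x_i)$, $i=1,\dots,N$, with $x_i\in\mathbb{R}^D$ and labels $y_i\in\{1,\dots,K\}$, $K\ge 2$. Parameters are $u\in\mathbb{R}^N$ and $W=[w_1,\dots,w_K]\in\mathbb{R}^{D\times K}$; $\mu\ge 0$ is a ridge parameter. For $j\in\{1,\dots,K\}$ let $n_j=|\{i:y_i=j\}|$ and $\beta_j=\frac{N}{n_j+(N-n_j)/(K-1)}$. For $i\in\{1,\dots,N\}$ and $k\neq y_i$, $$f_{ik}(u,W)=N\big(u_i+e^{-u_i}+(K-1)e^{x_i^\top(w_k-w_{y_i})-u_i}\big)+\tfrac{\mu}{2}\big(\beta_{y_i}\|w_{y_i}\|_2^2+\beta_k\|w_k\|_2^2\big),$$ and $f(u,W)=\mathbb{E}_{ik}[f_{ik}(u,W)]$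 with $i$ uniform on $\{1,\dots,N\}$ and $k$ uniform on $\{1,\dots,K\}\setminus\{y_i\}$. Norms on $W$ are Frobenius norms. *)

theory Defs
  imports "HOL-Analysis.Analysis"
begin

text \<open>Data index type 'n (N = CARD('n)), class type 'k (K = CARD('k)),
  feature type 'd (D = CARD('d)).  u :: real^'n, W :: real^'d^'k with column
  w_j = W$j; the norm on real^'d^'k is the Frobenius norm.\<close>

definition ncls :: "('n::finite \<Rightarrow> 'k) \<Rightarrow> 'k \<Rightarrow> nat" where
  "ncls y j = card {i. y i = j}"

definition beta :: "('n::finite \<Rightarrow> 'k::finite) \<Rightarrow> 'k \<Rightarrow> real" where
  "beta y j = real CARD('n) /
     (real (ncls y j) + (real CARD('n) - real (ncls y j)) / (real CARD('k) - 1))"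

definition f_ik :: "real \<Rightarrow> ('n::finite \<Rightarrow> real^'d::finite) \<Rightarrow> ('n \<Rightarrow> 'k::finite)
    \<Rightarrow> 'n \<Rightarrow> 'k \<Rightarrow> real^'n \<Rightarrow> real^'d^'k \<Rightarrow> real" where
  "f_ik mu x y i k u W =
     real CARD('n) * (u$i + exp (- u$i)
        + (real CARD('k) - 1) * exp (x i \<bullet> (W$k - W$(y i)) - u$i))
     + mu / 2 * (beta y (y i) * (norm (W$(y i)))^2 + beta y k * (norm (W$k))^2)"

definition f_full :: "real \<Rightarrow> ('n::finite \<Rightarrow> real^'d::finite) \<Rightarrow> ('n \<Rightarrow> 'k::finite)
    \<Rightarrow> real^'n \<Rightarrow> real^'d^'k \<Rightarrow> real" where
  "f_full mu x y u W =
     (\<Sum>i\<in>UNIV. (\<Sum>k\<in>{k. k \<noteq> y i}. f_ik mu x y i k u W) / (real CARD('k) - 1))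
       / real CARD('n)"

definition isgd_obj :: "real \<Rightarrow> real \<Rightarrow> ('n::finite \<Rightarrow> real^'d::finite) \<Rightarrow> ('n \<Rightarrow> 'k::finite)
    \<Rightarrow> 'n \<Rightarrow> 'k \<Rightarrow> real^'n \<Rightarrow> real^'d^'k \<Rightarrow> real^'n \<Rightarrow> real^'d^'k \<Rightarrow> real" where
  "isgd_obj eta mu x y i k ut Wt u W =
     2 * eta * f_ik mu x y i k u W + (norm (u - ut))^2 + (norm (W - Wt))^2"

definition is_isgd_iterate :: "real \<Rightarrow> real \<Rightarrow> ('n::finite \<Rightarrow> real^'d::finite) \<Rightarrow> ('n \<Rightarrow> 'k::finite)
    \<Rightarrow> 'n \<Rightarrow> 'k \<Rightarrow> real^'n \<Rightarrow> real^'d^'k \<Rightarrow> real^'n \<Rightarrow> real^'d^'k \<Rightarrow> bool" where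
  "is_isgd_iterate eta mu x y i k ut Wt u' W' \<longleftrightarrow>
     (\<forall>u W. isgd_obj eta mu x y i k ut Wt u' W' \<le> isgd_obj eta mu x y i k ut Wt u W)"

text \<open>Inputs are scalars only: eta, N, K,
  ak = 1/(1+eta mu beta_k), ay = 1/(1+eta mu beta_{y_i}),
  c = x_i^T(ak wt_k - ay wt_{y_i}) (first inner product), q = x_i^T x_i (second
  inner product), ut = ut_i.\<close>

definition isgd_L :: "real \<Rightarrow> real \<Rightarrow> real \<Rightarrow> real \<Rightarrow> real \<Rightarrow> real \<Rightarrow> real" where
  "isgd_L eta N K c q ut = \<bar>c - ut\<bar> + 2 * eta * N * q + ln (2 * K)"

text \<open>For q > 0 the bisection variable is b = c - x_i^T(w_k - w_{y_i}) = s Q with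
  s = eta N (K-1) exp(x_i^T(w_k-w_{y_i}) - u_i) and Q = q (ak + ay);
  u_i is recovered explicitly from b.\<close>
definition isgd_ub :: "real \<Rightarrow> real \<Rightarrow> real \<Rightarrow> real \<Rightarrow> real \<Rightarrow> real \<Rightarrow> real" where
  "isgd_ub eta N K c Q b = c - b - ln (b / (Q * eta * N * (K - 1)))"

text \<open>Returns (g, lo, hi): g is the (decreasing) scalar function whose root in
  [lo, hi] determines the iterate.\<close>
definition isgd_bracket :: "real \<Rightarrow> real \<Rightarrow> real \<Rightarrow> real \<Rightarrow> real \<Rightarrow> real \<Rightarrow> real \<Rightarrow> real
    \<Rightarrow> (real \<Rightarrow> real) \<times> real \<times> real" where
  "isgd_bracket eta N K ak ay c q ut =
     (let Q = q * (ak + ay); A = 1 + (K - 1) * exp c in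
      if q > 0 then
        ((\<lambda>b. Q * (isgd_ub eta N K c Q b - ut + eta * N * (1 - exp (- isgd_ub eta N K c Q b))) - b),
         0, isgd_L eta N K c q ut)
      else
        ((\<lambda>v. ut - v - eta * N * (1 - A * exp (- v))), min ut (ln A), max ut (ln A)))"

text \<open>From the scalar root r: (new u_i, s), where the updated columns are
  w_k' = ak (wt_k - s x_i), w_{y_i}' = ay (wt_{y_i} + s x_i).\<close>
definition isgd_scal :: "real \<Rightarrow> real \<Rightarrow> real \<Rightarrow> real \<Rightarrow> real \<Rightarrow> real \<Rightarrow> real \<Rightarrow> real
    \<Rightarrow> real \<times> real" where
  "isgd_scal eta N K ak ay c q r =
     (if q > 0 then (isgd_ub eta N K c (q * (ak + ay)) r, r / (q * (ak + ay)))
      else (r, eta * N * (K - 1) * exp (c - r)))"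

definition isgd_recon :: "'n::finite \<Rightarrow> 'k::finite \<Rightarrow> 'k \<Rightarrow> real^'d::finite \<Rightarrow> real^'n
    \<Rightarrow> real^'d^'k \<Rightarrow> real \<Rightarrow> real \<Rightarrow> real \<times> real \<Rightarrow> (real^'n) \<times> (real^'d^'k)" where
  "isgd_recon i k ky xi ut Wt ak ay us =
     (case us of (uval, s) \<Rightarrow>
       ((\<chi> j. if j = i then uval else ut$j),
        (\<chi> j. if j = k then ak *\<^sub>R (Wt$k - s *\<^sub>R xi)
              else if j = ky then ay *\<^sub>R (Wt$ky + s *\<^sub>R xi) else Wt$j)))"

text \<open>Bisection for a decreasing function g: n steps = n evaluations of g.\<close>
fun bisect :: "(real \<Rightarrow> real) \<Rightarrow> real \<Rightarrow> real \<Rightarrow> nat \<Rightarrow> real \<times> real" where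
  "bisect g lo hi 0 = (lo, hi)"
| "bisect g lo hi (Suc n) =
     (case bisect g lo hi n of (a, b) \<Rightarrow>
        let m = (a + b) / 2 in if g m \<ge> 0 then (m, b) else (a, m))"

end

theory Submission
  imports Defs
begin

(* The iterate minimises 2 eta f_ik + |(u, W) - (ut, Wt)|^2 with f_ik convex, so a point (us, Ws)
   with (ut, Wt) - (us, Ws) = eta grad f_ik (us, Ws) is the unique minimiser: the objective exceeds
   its value there by at least |(u, W) - (us, Ws)|^2.  Only u_i, w_k and w_{y_i} move, and the
   stationarity conditions force w_k' = ak (wt_k - s x_i) and w_{y_i}' = ay (wt_{y_i} + s x_i), so
   they reduce to two scalar equations in (u_i', s) in which x_i and Wt enter only through the
   inner products c and q.  Eliminating one unknown leaves a strictly decreasing continuous function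
   of one real variable that changes sign on an interval of length at most L; bisection halves the
   bracket of its root at every evaluation, so log2 (L / eps) evaluations reach accuracy eps. *)

lemma beta_nonneg:
  fixes y :: "'n::finite \<Rightarrow> 'k::finite"
  shows "beta y j \<ge> 0"
proof -
  have "ncls y j \<le> CARD('n)" unfolding ncls_def by (rule card_mono) auto
  moreover have "real CARD('k) - 1 \<ge> 0" by simp
  ultimately show ?thesis unfolding beta_def by (intro divide_nonneg_nonneg add_nonneg_nonneg) auto
qed

lemma exp_ge_tangent: "exp t0 * (1 + (t - t0)) \<le> exp (t::real)"
  using mult_left_mono[OF exp_ge_add_one_self[of "t - t0"], of "exp t0"]
  by (simp add: exp_diff)

lemma power2_norm_ge_tangent:
  fixes a b :: "'a::real_inner"
  shows "(norm b)\<^sup>2 + 2 * (b \<bullet> (a - b)) \<le> (norm a)\<^sup>2"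
proof -
  have "(norm a)\<^sup>2 = (norm b)\<^sup>2 + 2 * (b \<bullet> (a - b)) + (norm (a - b))\<^sup>2"
    by (simp add: power2_norm_eq_inner inner_diff_left inner_diff_right inner_commute)
  then show ?thesis by simp
qed

lemma prox_quadratic_growth:
  fixes h :: "'a::real_inner \<Rightarrow> real"
  assumes "\<And>z. h zs + 2 * ((zt - zs) \<bullet> (z - zs)) \<le> h z"
  shows "h zs + (norm (zs - zt))\<^sup>2 + (norm (z - zs))\<^sup>2 \<le> h z + (norm (z - zt))\<^sup>2"
proof -
  have "(norm (z - zt))\<^sup>2 = (norm (z - zs))\<^sup>2 + (norm (zs - zt))\<^sup>2 - 2 * ((zt - zs) \<bullet> (z - zs))"
    by (simp add: power2_norm_eq_inner inner_diff_left inner_diff_right inner_commute)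
  with assms[of z] show ?thesis by simp
qed

lemma argmin_iff_of_quadratic_growth:
  fixes F :: "'a::real_normed_vector \<Rightarrow> real"
  assumes growth: "\<And>z. F zs + (norm (z - zs))\<^sup>2 \<le> F z"
  shows "(\<forall>z. F z' \<le> F z) \<longleftrightarrow> z' = zs"
proof
  assume "\<forall>z. F z' \<le> F z"
  then have "(norm (z' - zs))\<^sup>2 \<le> 0" using growth[of z'] by (smt (verit))
  then show "z' = zs" by simp
qed (use growth in \<open>smt (verit) zero_le_power2\<close>)

(* Only points strictly above lo are tested: for q > 0 the left end lo = 0 is a junk point of
   the bisected function, which contains ln b. *)
definition brackets_root :: "(real \<Rightarrow> real) \<Rightarrow> real \<Rightarrow> real \<Rightarrow> real \<Rightarrow> bool" where
  "brackets_root g lo hi r \<longleftrightarrow> lo \<le> r \<and> r \<le> hi \<and>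
     (\<forall>m. lo < m \<and> m < r \<longrightarrow> 0 \<le> g m) \<and> (\<forall>m. r < m \<and> m \<le> hi \<longrightarrow> g m < 0)"

lemma brackets_root_if_strict_antimono:
  assumes "strict_antimono_on D g" "{lo<..hi} \<subseteq> D" "r \<in> D" "g r = 0" "lo \<le> r" "r \<le> hi"
  shows "brackets_root g lo hi r"
  using assms unfolding brackets_root_def monotone_on_def by (smt (verit) greaterThanAtMost_iff subsetD)

lemma brackets_root_bisect_step:
  assumes "brackets_root g a b r"
  shows "brackets_root g (if 0 \<le> g ((a + b) / 2) then (a + b) / 2 else a)
                         (if 0 \<le> g ((a + b) / 2) then b else (a + b) / 2) r"
proof -
  define m where "m = (a + b) / 2"
  have ab: "a \<le> r" "r \<le> b" and left: "\<And>t. a < t \<Longrightarrow> t < r \<Longrightarrow> 0 \<le> g t"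
    and right: "\<And>t. r < t \<Longrightarrow> t \<le> b \<Longrightarrow> g t < 0"
    using assms unfolding brackets_root_def by auto
  have m: "a \<le> m" "m \<le> b" "m < r \<Longrightarrow> a < m" using ab by (auto simp: m_def)
  then have "0 \<le> g m \<Longrightarrow> m \<le> r" "g m < 0 \<Longrightarrow> r \<le> m"
    using left right by (meson not_le)+
  then show ?thesis
    using ab m left right unfolding brackets_root_def m_def[symmetric] by force
qed

lemma brackets_root_bisect:
  assumes "brackets_root g lo hi r" "bisect g lo hi n = (a, b)"
  shows "brackets_root g a b r \<and> b - a = (hi - lo) / 2 ^ n"
  using assms(2)
proof (induction n arbitrary: a b)
  case 0
  then show ?case using assms(1) by simp
next
  case (Suc n)
  obtain a0 b0 where ab0: "bisect g lo hi n = (a0, b0)" by fastforce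
  with Suc.prems have "a = (if 0 \<le> g ((a0 + b0) / 2) then (a0 + b0) / 2 else a0)"
    "b = (if 0 \<le> g ((a0 + b0) / 2) then b0 else (a0 + b0) / 2)"
    by (auto simp: Let_def)
  with Suc.IH[OF ab0] brackets_root_bisect_step[of g a0 b0 r] show ?case
    by (auto simp: field_simps)
qed

lemma bisect_converges:
  assumes root: "brackets_root g lo hi r" and width: "hi - lo \<le> L" "L > 0" and "eps > 0"
    and n: "log 2 (1 / eps) + log 2 L \<le> real n"
  shows "case bisect g lo hi n of (a, b) \<Rightarrow> a \<le> r \<and> r \<le> b \<and> b - a \<le> eps"
proof -
  obtain a b where ab: "bisect g lo hi n = (a, b)" by fastforce
  note inv = brackets_root_bisect[OF root ab]
  have "L / eps = 2 powr (log 2 (1 / eps) + log 2 L)"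
    using width \<open>eps > 0\<close> by (simp add: powr_add)
  also have "\<dots> \<le> 2 ^ n"
    using n by (simp flip: powr_realpow)
  finally have "L \<le> eps * 2 ^ n"
    using \<open>eps > 0\<close> by (simp add: divide_le_eq mult.commute)
  with width have "(hi - lo) / 2 ^ n \<le> eps"
    by (simp add: divide_le_eq mult.commute)
  with inv ab show ?thesis by (simp add: brackets_root_def)
qed

lemma f_ik_ge_linearization:
  fixes x :: "'n::finite \<Rightarrow> real^'d::finite" and y :: "'n \<Rightarrow> 'k::finite"
    and i :: 'n and k :: 'k and u u0 :: "real^'n" and W W0 :: "real^'d^'k"
  assumes "mu \<ge> 0"
  defines "s \<equiv> real CARD('n) * (real CARD('k) - 1) * exp (x i \<bullet> (W0$k - W0$(y i)) - u0$i)"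
  shows "f_ik mu x y i k u0 W0
      + (real CARD('n) * (1 - exp (- u0$i)) - s) * (u$i - u0$i)
      + (s *\<^sub>R x i + (mu * beta y k) *\<^sub>R W0$k) \<bullet> (W$k - W0$k)
      + ((mu * beta y (y i)) *\<^sub>R W0$(y i) - s *\<^sub>R x i) \<bullet> (W$(y i) - W0$(y i))
    \<le> f_ik mu x y i k u W"
proof -
  define N K1 where "N = real CARD('n)" and "K1 = real CARD('k) - 1"
  define z0 z where "z0 = x i \<bullet> (W0$k - W0$(y i)) - u0$i" and "z = x i \<bullet> (W$k - W$(y i)) - u$i"
  have coeffs: "N \<ge> 0" "N * K1 \<ge> 0" "mu * beta y k / 2 \<ge> 0" "mu * beta y (y i) / 2 \<ge> 0"
    using assms(1) beta_nonneg[of y] by (simp_all add: N_def K1_def)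
  have "N * (exp (- u0$i) * (1 + (- u$i - - u0$i))) \<le> N * exp (- u$i)"
    by (rule mult_left_mono[OF exp_ge_tangent coeffs(1)])
  moreover have "N * K1 * (exp z0 * (1 + (z - z0))) \<le> N * K1 * exp z"
    by (rule mult_left_mono[OF exp_ge_tangent coeffs(2)])
  moreover have "mu * beta y k / 2 * ((norm (W0$k))\<^sup>2 + 2 * (W0$k \<bullet> (W$k - W0$k)))
      \<le> mu * beta y k / 2 * (norm (W$k))\<^sup>2"
    by (rule mult_left_mono[OF power2_norm_ge_tangent coeffs(3)])
  moreover have "mu * beta y (y i) / 2 * ((norm (W0$(y i)))\<^sup>2 + 2 * (W0$(y i) \<bullet> (W$(y i) - W0$(y i))))
      \<le> mu * beta y (y i) / 2 * (norm (W$(y i)))\<^sup>2"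
    by (rule mult_left_mono[OF power2_norm_ge_tangent coeffs(4)])
  moreover have "z - z0 = x i \<bullet> (W$k - W0$k) - x i \<bullet> (W$(y i) - W0$(y i)) - (u$i - u0$i)"
    by (simp add: z_def z0_def inner_diff_right)
  ultimately show ?thesis
    unfolding f_ik_def s_def N_def[symmetric] K1_def[symmetric] z0_def[symmetric] z_def[symmetric]
    by (simp add: inner_diff_left inner_add_left algebra_simps)
qed

lemma inner_vec_supported:
  fixes a b :: "'a::real_inner^'n::finite"
  assumes "\<And>j. j \<notin> S \<Longrightarrow> b$j = 0"
  shows "a \<bullet> b = (\<Sum>j\<in>S. a$j \<bullet> b$j)"
proof -
  have "a \<bullet> b = (\<Sum>j\<in>UNIV. a$j \<bullet> b$j)" by (simp add: inner_vec_def)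
  also have "\<dots> = (\<Sum>j\<in>S. a$j \<bullet> b$j)"
    by (rule sum.mono_neutral_right) (auto simp: assms)
  finally show ?thesis .
qed

(* Stationarity of the objective at u_i' = v, w_k' = ak (wt_k - s x_i), w_{y_i}' = ay (wt_{y_i} + s x_i),
   using x_i . (w_k' - w_{y_i}') = c - s Q with Q = (x_i . x_i) (ak + ay). *)
definition isgd_stationary :: "real \<Rightarrow> real \<Rightarrow> real \<Rightarrow> real \<Rightarrow> real \<Rightarrow> real \<Rightarrow> real \<times> real \<Rightarrow> bool" where
  "isgd_stationary eta N K c Q ut vs \<longleftrightarrow> (case vs of (v, s) \<Rightarrow>
     s = eta * N * (K - 1) * exp (c - s * Q - v) \<and> v - ut + eta * N * (1 - exp (- v)) = s)"

lemma isgd_recon_prox_condition: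
  fixes x :: "'n::finite \<Rightarrow> real^'d::finite" and y :: "'n \<Rightarrow> 'k::finite"
    and i :: 'n and k :: 'k and ut us :: "real^'n" and Wt Ws :: "real^'d^'k" and eta mu :: real
  assumes "eta > 0" "mu \<ge> 0" "k \<noteq> y i"
    and ak: "ak = 1 / (1 + eta * mu * beta y k)" and ay: "ay = 1 / (1 + eta * mu * beta y (y i))"
    and c: "c = x i \<bullet> (ak *\<^sub>R Wt$k - ay *\<^sub>R Wt$(y i))"
    and stationary: "isgd_stationary eta (real CARD('n)) (real CARD('k)) c ((x i \<bullet> x i) * (ak + ay)) (ut$i) (v, s)"
    and rec: "isgd_recon i k (y i) (x i) ut Wt ak ay (v, s) = (us, Ws)"
  defines "sf \<equiv> real CARD('n) * (real CARD('k) - 1) * exp (x i \<bullet> (Ws$k - Ws$(y i)) - us$i)"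
  shows "ut$i - us$i = eta * (real CARD('n) * (1 - exp (- us$i)) - sf)"
    and "Wt$k - Ws$k = eta *\<^sub>R (sf *\<^sub>R x i + (mu * beta y k) *\<^sub>R Ws$k)"
    and "Wt$(y i) - Ws$(y i) = eta *\<^sub>R ((mu * beta y (y i)) *\<^sub>R Ws$(y i) - sf *\<^sub>R x i)"
proof -
  have us: "us$i = v" and Wk: "Ws$k = ak *\<^sub>R (Wt$k - s *\<^sub>R x i)"
    and Wy: "Ws$(y i) = ay *\<^sub>R (Wt$(y i) + s *\<^sub>R x i)"
    using rec \<open>k \<noteq> y i\<close> by (auto simp: isgd_recon_def)
  have "x i \<bullet> (Ws$k - Ws$(y i)) - us$i = c - s * ((x i \<bullet> x i) * (ak + ay)) - v"
    unfolding Wk Wy us c by (simp add: inner_diff_right inner_add_right algebra_simps)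
  then have s_eq: "s = eta * sf"
    using stationary by (simp add: isgd_stationary_def sf_def mult.assoc)
  with stationary show "ut$i - us$i = eta * (real CARD('n) * (1 - exp (- us$i)) - sf)"
    by (simp add: isgd_stationary_def us algebra_simps)
  have pos: "1 + eta * mu * beta y j > 0" for j
    using assms(1,2) beta_nonneg[of y j] by (simp add: add_pos_nonneg)
  have "(1 + eta * mu * beta y k) *\<^sub>R Ws$k = Wt$k - s *\<^sub>R x i"
    using pos[of k] by (simp add: Wk ak)
  then show "Wt$k - Ws$k = eta *\<^sub>R (sf *\<^sub>R x i + (mu * beta y k) *\<^sub>R Ws$k)"
    by (simp add: s_eq algebra_simps)
  have "(1 + eta * mu * beta y (y i)) *\<^sub>R Ws$(y i) = Wt$(y i) + s *\<^sub>R x i"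
    using pos[of "y i"] by (simp add: Wy ay)
  then show "Wt$(y i) - Ws$(y i) = eta *\<^sub>R ((mu * beta y (y i)) *\<^sub>R Ws$(y i) - sf *\<^sub>R x i)"
    by (simp add: s_eq algebra_simps)
qed

lemma is_isgd_iterate_iff_isgd_recon:
  fixes x :: "'n::finite \<Rightarrow> real^'d::finite" and y :: "'n \<Rightarrow> 'k::finite"
    and i :: 'n and k :: 'k and ut u' :: "real^'n" and Wt W' :: "real^'d^'k" and eta mu :: real
  assumes "eta > 0" "mu \<ge> 0" "k \<noteq> y i"
    and "ak = 1 / (1 + eta * mu * beta y k)" "ay = 1 / (1 + eta * mu * beta y (y i))"
    and "c = x i \<bullet> (ak *\<^sub>R Wt$k - ay *\<^sub>R Wt$(y i))"
    and "isgd_stationary eta (real CARD('n)) (real CARD('k)) c ((x i \<bullet> x i) * (ak + ay)) (ut$i) (v, s)"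
  shows "is_isgd_iterate eta mu x y i k ut Wt u' W' \<longleftrightarrow>
    (u', W') = isgd_recon i k (y i) (x i) ut Wt ak ay (v, s)"
proof -
  obtain us Ws where rec: "isgd_recon i k (y i) (x i) ut Wt ak ay (v, s) = (us, Ws)"
    by fastforce
  define sf where "sf = real CARD('n) * (real CARD('k) - 1) * exp (x i \<bullet> (Ws$k - Ws$(y i)) - us$i)"
  note prox = isgd_recon_prox_condition[where x=x and y=y and i=i and k=k and Wt=Wt,
      OF assms rec, folded sf_def]
  have support: "\<And>j. j \<noteq> i \<Longrightarrow> us$j = ut$j" "\<And>j. j \<noteq> k \<Longrightarrow> j \<noteq> y i \<Longrightarrow> Ws$j = Wt$j"
    using rec by (auto simp: isgd_recon_def)
  define h where "h = (\<lambda>(u, W). 2 * eta * f_ik mu x y i k u W)"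
  have subgradient: "h (us, Ws) + 2 * (((ut, Wt) - (us, Ws)) \<bullet> (z - (us, Ws))) \<le> h z" for z
  proof (cases z)
    case (Pair u W)
    have "(u - us) \<bullet> (ut - us) = (u$i - us$i) * (ut$i - us$i)"
      using inner_vec_supported[where S="{i}" and a="u - us" and b="ut - us"] support(1) by simp
    moreover have "(W - Ws) \<bullet> (Wt - Ws)
        = (W$k - Ws$k) \<bullet> (Wt$k - Ws$k) + (W$(y i) - Ws$(y i)) \<bullet> (Wt$(y i) - Ws$(y i))"
      using inner_vec_supported[where S="{k, y i}" and a="W - Ws" and b="Wt - Ws"] support(2) assms(3)
      by simp
    ultimately have "((ut, Wt) - (us, Ws)) \<bullet> (z - (us, Ws)) = eta *
        ((real CARD('n) * (1 - exp (- us$i)) - sf) * (u$i - us$i)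
         + (sf *\<^sub>R x i + (mu * beta y k) *\<^sub>R Ws$k) \<bullet> (W$k - Ws$k)
         + ((mu * beta y (y i)) *\<^sub>R Ws$(y i) - sf *\<^sub>R x i) \<bullet> (W$(y i) - Ws$(y i)))"
      unfolding Pair prox by (simp add: inner_commute distrib_left)
    moreover have "2 * eta * (f_ik mu x y i k us Ws
        + (real CARD('n) * (1 - exp (- us$i)) - sf) * (u$i - us$i)
        + (sf *\<^sub>R x i + (mu * beta y k) *\<^sub>R Ws$k) \<bullet> (W$k - Ws$k)
        + ((mu * beta y (y i)) *\<^sub>R Ws$(y i) - sf *\<^sub>R x i) \<bullet> (W$(y i) - Ws$(y i)))
      \<le> 2 * eta * f_ik mu x y i k u W"
      using f_ik_ge_linearization[OF assms(2), of x y i k us Ws u W] assms(1)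
      unfolding sf_def by (intro mult_left_mono) auto
    ultimately show ?thesis
      unfolding Pair h_def by (simp add: algebra_simps)
  qed
  define F where "F = (\<lambda>(u, W). isgd_obj eta mu x y i k ut Wt u W)"
  have F_eq: "F z = h z + (norm (z - (ut, Wt)))\<^sup>2" for z
    by (cases z) (simp add: F_def h_def isgd_obj_def norm_Pair)
  have "F (us, Ws) + (norm (z - (us, Ws)))\<^sup>2 \<le> F z" for z
    using prox_quadratic_growth[of h "(us, Ws)" "(ut, Wt)" z, OF subgradient] by (simp add: F_eq)
  then have "(\<forall>z. F (u', W') \<le> F z) \<longleftrightarrow> (u', W') = (us, Ws)"
    by (rule argmin_iff_of_quadratic_growth)
  then show ?thesis
    unfolding rec is_isgd_iterate_def by (simp add: F_def)
qed

lemma isgd_bracket_zero: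
  assumes "eta > 0" "N > 0" "K \<ge> 2"
  shows "case isgd_bracket eta N K ak ay 0 0 ut of (g, lo, hi) \<Rightarrow>
    hi - lo \<le> isgd_L eta N K 0 0 ut \<and>
    (\<exists>r. brackets_root g lo hi r \<and> isgd_stationary eta N K 0 0 ut (isgd_scal eta N K ak ay 0 0 r))"
proof -
  define g where "g = (\<lambda>v. ut - v - eta * N * (1 - K * exp (- v)))"
  define lo hi where "lo = min ut (ln K)" and "hi = max ut (ln K)"
  have bracket: "isgd_bracket eta N K ak ay 0 0 ut = (g, lo, hi)"
    by (simp add: isgd_bracket_def g_def lo_def hi_def)
  have antimono: "strict_antimono_on UNIV g"
  proof (rule monotone_onI)
    fix a b :: real assume "a < b"
    then have "eta * N * K * exp (- b) < eta * N * K * exp (- a)"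
      using assms by simp
    with \<open>a < b\<close> show "g b < g a" by (simp add: g_def algebra_simps)
  qed
  have "g (ln K) = ut - ln K" "g ut = eta * N * (exp (ln K - ut) - 1)"
    using assms by (simp_all add: g_def exp_diff exp_minus field_simps)
  then have "g hi \<le> 0" "0 \<le> g lo"
    using assms by (auto simp: lo_def hi_def min_def max_def mult_nonneg_nonpos)
  moreover have "lo \<le> hi" "continuous_on {lo..hi} g"
    by (auto simp: lo_def hi_def g_def intro!: continuous_intros)
  ultimately obtain r where r: "lo \<le> r" "r \<le> hi" "g r = 0"
    using IVT2'[of g hi 0 lo] by blast
  have "ln K \<ge> 0" using assms by simp
  then have "hi - lo \<le> \<bar>ut\<bar> + ln K"
    by (auto simp: lo_def hi_def)
  also have "\<dots> \<le> isgd_L eta N K 0 0 ut"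
    using assms by (simp add: isgd_L_def ln_mult)
  finally have "hi - lo \<le> isgd_L eta N K 0 0 ut" .
  moreover have "brackets_root g lo hi r"
    using antimono r by (intro brackets_root_if_strict_antimono) auto
  moreover have "isgd_stationary eta N K 0 0 ut (isgd_scal eta N K ak ay 0 0 r)"
    using r(3) by (simp add: isgd_scal_def isgd_stationary_def g_def algebra_simps)
  ultimately show ?thesis unfolding bracket by auto
qed

(* With b = s Q the first stationarity equation solves to v = isgd_ub b, and the second becomes
   isgd_root_fun b = 0. *)
definition isgd_root_fun :: "real \<Rightarrow> real \<Rightarrow> real \<Rightarrow> real \<Rightarrow> real \<Rightarrow> real \<Rightarrow> real \<Rightarrow> real" where
  "isgd_root_fun eta N K c Q ut b =
     Q * (isgd_ub eta N K c Q b - ut + eta * N * (1 - exp (- isgd_ub eta N K c Q b))) - b"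

lemma isgd_bracket_pos_eq:
  "q > 0 \<Longrightarrow> isgd_bracket eta N K ak ay c q ut
     = (isgd_root_fun eta N K c (q * (ak + ay)) ut, 0, isgd_L eta N K c q ut)"
  by (simp add: isgd_bracket_def isgd_root_fun_def[abs_def] Let_def)

lemma isgd_ub_eq:
  assumes "b > 0" "Q * eta * N * (K - 1) > 0"
  shows "isgd_ub eta N K c Q b = c - b - ln b + ln (Q * eta * N * (K - 1))"
  by (simp add: isgd_ub_def ln_divide_pos[OF assms])

lemma isgd_root_fun_strict_antimono:
  assumes "eta > 0" "N > 0" "K > 1" "Q > 0"
  shows "strict_antimono_on {0<..} (isgd_root_fun eta N K c Q ut)"
proof (rule monotone_onI)
  fix a b :: real assume "a \<in> {0<..}" "b \<in> {0<..}" "a < b"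
  moreover from this have "ln a < ln b" by simp
  moreover have "Q * eta * N * (K - 1) > 0" using assms by simp
  ultimately have "isgd_ub eta N K c Q b < isgd_ub eta N K c Q a"
    using isgd_ub_eq[of a] isgd_ub_eq[of b] by (simp only: greaterThan_iff)
  moreover from this have "eta * N * exp (- isgd_ub eta N K c Q a) < eta * N * exp (- isgd_ub eta N K c Q b)"
    using assms(1,2) by simp
  ultimately have "isgd_ub eta N K c Q b - ut + eta * N * (1 - exp (- isgd_ub eta N K c Q b))
      < isgd_ub eta N K c Q a - ut + eta * N * (1 - exp (- isgd_ub eta N K c Q a))"
    by (simp add: algebra_simps)
  with \<open>a < b\<close> assms(4) show "isgd_root_fun eta N K c Q ut b < isgd_root_fun eta N K c Q ut a"
    unfolding isgd_root_fun_def by (smt (verit) mult_strict_left_mono)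
qed

lemma isgd_root_fun_nonpos:
  assumes "eta > 0" "N > 0" "K \<ge> 2" "Q > 0" and L: "\<bar>c - ut\<bar> + Q * eta * N + ln (K - 1) \<le> L"
  shows "isgd_root_fun eta N K c Q ut L \<le> 0"
proof -
  have pos: "ln (K - 1) \<ge> 0" "Q * eta * N > 0" using assms by simp_all
  then have QL: "Q * eta * N \<le> L" using L by (smt (verit) abs_ge_zero)
  then have "ln (Q * eta * N) \<le> ln L" using pos(2) by simp
  moreover have "isgd_ub eta N K c Q L = c - L - ln L + ln (Q * eta * N) + ln (K - 1)"
    using QL pos assms(3) by (simp add: isgd_ub_eq ln_mult_pos[OF pos(2)])
  ultimately have "isgd_ub eta N K c Q L \<le> ut - Q * eta * N"
    using L abs_ge_self[of "c - ut"] by linarith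
  moreover have "0 \<le> eta * N * exp (- isgd_ub eta N K c Q L)" using assms(1,2) by simp
  ultimately have "isgd_ub eta N K c Q L - ut + eta * N * (1 - exp (- isgd_ub eta N K c Q L)) \<le> eta * N"
    using pos(2) by (simp add: algebra_simps)
  then have "Q * (isgd_ub eta N K c Q L - ut + eta * N * (1 - exp (- isgd_ub eta N K c Q L))) \<le> Q * (eta * N)"
    using assms(4) by simp
  with QL show ?thesis by (simp add: isgd_root_fun_def mult.assoc)
qed

lemma isgd_root_fun_nonneg_near_zero:
  assumes "eta > 0" "N > 0" "K > 1" "Q > 0" "L > 0"
  obtains b where "0 < b" "b \<le> L" "0 \<le> isgd_root_fun eta N K c Q ut b"
proof -
  \<comment> \<open>b is small enough that isgd_ub b \<ge> max 0 (ut + 1/Q), so that the factor multiplying Q in isgd_root_fun b is \<ge> 1/Q\<close>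
  define M where "M = max 0 (ut + 1 / Q)"
  define b where "b = min (min 1 L) (exp (c + ln (Q * eta * N * (K - 1)) - 1 - M))"
  have b: "0 < b" "b \<le> 1" "b \<le> L" using assms(5) by (auto simp: b_def)
  have "ln b \<le> ln (exp (c + ln (Q * eta * N * (K - 1)) - 1 - M))"
    using b(1) by (subst ln_le_cancel_iff) (auto simp: b_def)
  then have "M \<le> isgd_ub eta N K c Q b" using b assms by (simp add: isgd_ub_eq)
  then have "0 \<le> isgd_ub eta N K c Q b" "1 / Q \<le> isgd_ub eta N K c Q b - ut"
    by (auto simp: M_def)
  moreover from this have "0 \<le> eta * N * (1 - exp (- isgd_ub eta N K c Q b))"
    using assms(1,2) by simp
  ultimately have "1 / Q \<le> isgd_ub eta N K c Q b - ut + eta * N * (1 - exp (- isgd_ub eta N K c Q b))"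
    by linarith
  then have "1 \<le> Q * (isgd_ub eta N K c Q b - ut + eta * N * (1 - exp (- isgd_ub eta N K c Q b)))"
    using assms(4) by (simp add: field_simps)
  with b that show ?thesis by (simp add: isgd_root_fun_def)
qed

lemma isgd_root_fun_continuous_on:
  assumes "0 < b0" "Q * eta * N * (K - 1) > 0"
  shows "continuous_on {b0..L} (isgd_root_fun eta N K c Q ut)"
proof -
  define C where "C = Q * eta * N * (K - 1)"
  have "continuous_on {b0..L} (\<lambda>b. Q * (c - b - ln b + ln C - ut
      + eta * N * (1 - exp (- (c - b - ln b + ln C)))) - b)"
    using assms(1) by (intro continuous_intros) auto
  then show ?thesis
    by (rule continuous_on_cong[THEN iffD1, rotated 2])
      (use assms in \<open>auto simp: isgd_root_fun_def isgd_ub_eq C_def\<close>)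
qed

lemma isgd_stationary_of_root_fun:
  assumes "eta > 0" "N > 0" "K > 1" "Q > 0" "r > 0" "isgd_root_fun eta N K c Q ut r = 0"
  shows "isgd_stationary eta N K c Q ut (isgd_ub eta N K c Q r, r / Q)"
proof -
  have "exp (c - r - isgd_ub eta N K c Q r) = r / (Q * eta * N * (K - 1))"
    using assms by (simp add: isgd_ub_eq exp_diff)
  moreover have "eta * N * (K - 1) * (r / (Q * eta * N * (K - 1))) = r / Q"
    using assms(1-4) by (simp add: field_simps)
  moreover have "isgd_ub eta N K c Q r - ut + eta * N * (1 - exp (- isgd_ub eta N K c Q r)) = r / Q"
    using assms(4,6) by (simp add: isgd_root_fun_def field_simps)
  ultimately show ?thesis
    using assms(4) by (simp add: isgd_stationary_def)
qed

lemma isgd_bracket_pos: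
  assumes "eta > 0" "N > 0" "K \<ge> 2" "q > 0" "0 < ak" "ak \<le> 1" "0 < ay" "ay \<le> 1"
  shows "case isgd_bracket eta N K ak ay c q ut of (g, lo, hi) \<Rightarrow>
    hi - lo \<le> isgd_L eta N K c q ut \<and>
    (\<exists>r. brackets_root g lo hi r \<and> isgd_stationary eta N K c (q * (ak + ay)) ut (isgd_scal eta N K ak ay c q r))"
proof -
  define Q L g where "Q = q * (ak + ay)" and "L = isgd_L eta N K c q ut"
    and "g = isgd_root_fun eta N K c Q ut"
  have Q: "0 < Q" "Q \<le> 2 * q" using assms by (auto simp: Q_def)
  have "Q * eta * N \<le> 2 * eta * N * q" "ln (K - 1) \<le> ln (2 * K)"
    using Q(2) assms by simp_all
  then have "\<bar>c - ut\<bar> + Q * eta * N + ln (K - 1) \<le> L"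
    by (simp add: L_def isgd_L_def)
  with Q(1) assms(1-3) have "g L \<le> 0"
    unfolding g_def by (intro isgd_root_fun_nonpos)
  have "L > 0" "K > 1" using assms by (simp_all add: L_def isgd_L_def add_nonneg_pos)
  then obtain b0 where "0 < b0" "b0 \<le> L" "0 \<le> g b0"
    unfolding g_def using Q(1) assms(1,2) isgd_root_fun_nonneg_near_zero by metis
  moreover note \<open>g L \<le> 0\<close>
  moreover have "continuous_on {b0..L} g"
    using \<open>0 < b0\<close> \<open>K > 1\<close> Q(1) assms(1,2) unfolding g_def
    by (intro isgd_root_fun_continuous_on) auto
  ultimately obtain r where r: "b0 \<le> r" "r \<le> L" "g r = 0"
    using IVT2'[of g L 0 b0] by blast
  with \<open>0 < b0\<close> have "brackets_root g 0 L r"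
    using isgd_root_fun_strict_antimono[of eta N K Q c ut] Q(1) assms(1-3)
    by (intro brackets_root_if_strict_antimono[of "{0<..}"]) (auto simp: g_def)
  moreover have "isgd_stationary eta N K c Q ut (isgd_scal eta N K ak ay c q r)"
    using isgd_stationary_of_root_fun[of eta N K Q r c ut] r \<open>0 < b0\<close> Q(1) assms(1-4)
    by (simp add: isgd_scal_def Q_def g_def)
  ultimately show ?thesis
    using assms(4) by (auto simp: isgd_bracket_pos_eq Q_def L_def g_def)
qed

lemma isgd_bracket_brackets_root:
  assumes "eta > 0" "N > 0" "K \<ge> 2" "0 < ak" "ak \<le> 1" "0 < ay" "ay \<le> 1"
    and "q \<ge> 0" "q = 0 \<Longrightarrow> c = 0"
  shows "case isgd_bracket eta N K ak ay c q ut of (g, lo, hi) \<Rightarrow>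
    hi - lo \<le> isgd_L eta N K c q ut \<and>
    (\<exists>r. brackets_root g lo hi r \<and> isgd_stationary eta N K c (q * (ak + ay)) ut (isgd_scal eta N K ak ay c q r))"
proof (cases "q > 0")
  case True
  with assms show ?thesis by (intro isgd_bracket_pos) auto
next
  case False
  with assms have "q = 0" "c = 0" by auto
  with isgd_bracket_zero[OF assms(1-3)] show ?thesis by simp
qed

theorem proposition4:
  fixes eta mu eps :: real
    and x :: "'n::finite \<Rightarrow> real^'d::finite" and y :: "'n \<Rightarrow> 'k::finite"
    and i :: 'n and k :: 'k and ut :: "real^'n" and Wt :: "real^'d^'k"
  assumes "CARD('k) \<ge> 2" and "eta > 0" and "mu \<ge> 0" and "eps > 0" and "k \<noteq> y i"
  defines "ak \<equiv> 1 / (1 + eta * mu * beta y k)"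
      and "ay \<equiv> 1 / (1 + eta * mu * beta y (y i))"
      and "c \<equiv> x i \<bullet> ((1 / (1 + eta * mu * beta y k)) *\<^sub>R Wt$k
                 - (1 / (1 + eta * mu * beta y (y i))) *\<^sub>R Wt$(y i))"
      and "q \<equiv> x i \<bullet> x i"
      and "N \<equiv> real CARD('n)" and "K \<equiv> real CARD('k)"
  shows "(\<exists>u' W'. is_isgd_iterate eta mu x y i k ut Wt u' W') \<and>
    (case isgd_bracket eta N K ak ay c q (ut$i) of (g, lo, hi) \<Rightarrow>
       hi - lo \<le> isgd_L eta N K c q (ut$i) \<and>
       (\<exists>r. lo \<le> r \<and> r \<le> hi \<and>
          (\<forall>u' W'. is_isgd_iterate eta mu x y i k ut Wt u' W' \<longleftrightarrow>
             (u', W') = isgd_recon i k (y i) (x i) ut Wt ak ay (isgd_scal eta N K ak ay c q r)) \<and>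
          (\<forall>n::nat. real n \<ge> log 2 (1 / eps) + log 2 (isgd_L eta N K c q (ut$i)) \<longrightarrow>
             (case bisect g lo hi n of (a, b) \<Rightarrow> a \<le> r \<and> r \<le> b \<and> b - a \<le> eps))))"
proof -
  have coeffs: "0 < ak" "ak \<le> 1" "0 < ay" "ay \<le> 1"
    using assms(2,3) beta_nonneg[of y] by (simp_all add: ak_def ay_def add_pos_nonneg)
  have NK: "N > 0" "K \<ge> 2" using assms(1) by (simp_all add: N_def K_def)
  have q: "q \<ge> 0" "q = 0 \<Longrightarrow> c = 0" by (simp_all add: q_def c_def)
  obtain g lo hi where bracket: "isgd_bracket eta N K ak ay c q (ut$i) = (g, lo, hi)"
    by (metis prod_cases3)
  with isgd_bracket_brackets_root[OF assms(2) NK coeffs q, of "ut$i"]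
  obtain r where width: "hi - lo \<le> isgd_L eta N K c q (ut$i)" and root: "brackets_root g lo hi r"
    and stationary: "isgd_stationary eta N K c (q * (ak + ay)) (ut$i) (isgd_scal eta N K ak ay c q r)"
    by auto
  obtain v s where vs: "isgd_scal eta N K ak ay c q r = (v, s)" by fastforce
  have "c = x i \<bullet> (ak *\<^sub>R Wt$k - ay *\<^sub>R Wt$(y i))" by (simp add: c_def ak_def ay_def)
  note iterate = is_isgd_iterate_iff_isgd_recon[where x=x and Wt=Wt and ut=ut and v=v and s=s,
      OF assms(2,3,5) ak_def[THEN meta_eq_to_obj_eq] ay_def[THEN meta_eq_to_obj_eq] this,
      folded N_def K_def q_def vs, OF stationary]
  have L: "isgd_L eta N K c q (ut$i) > 0"
    using assms(2) NK q(1) by (simp add: isgd_L_def add_nonneg_pos)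
  have "case bisect g lo hi n of (a, b) \<Rightarrow> a \<le> r \<and> r \<le> b \<and> b - a \<le> eps"
    if "real n \<ge> log 2 (1 / eps) + log 2 (isgd_L eta N K c q (ut$i))" for n
    using bisect_converges[OF root width L assms(4) that] .
  moreover have "\<exists>u' W'. is_isgd_iterate eta mu x y i k ut Wt u' W'"
    using iterate by (metis surj_pair)
  ultimately show ?thesis
    using root width iterate unfolding bracket brackets_root_def by auto
qed

end
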